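(* Let $T$ be a complete theory with monster model $\mathcal{U}$, $A\subseteq\mathcal{U}$ small, $b$ a finite tuple from $\mathcal{U}$, $\mu\in\mathfrak{M}_x(\mathcal{U})$, $\nu\in\mathfrak{M}_y(\mathcal{U})$, and $\varphi(y,b)\in\mathcal{L}_y(b)$ with $0<\nu(\varphi(y,b))<1$. If $\mu\blacktriangleright_A\nu$, then $\mu\blacktriangleright_{Ab}\nu_{[\varphi]}$.
   Context: For $C\subseteq\mathcal{U}$, $\mathcal{L}_x(C)$ is the Boolean algebra of formulas in $x$ with parameters from $C$ modulo $T$, embedded in $\mathcal{L}_{xy}(C)$ via $\varphi(x)\mapsto\varphi(x)\wedge y=y$; $\mathfrak{M}_x(C)$ is the set of finitely additive probability measures on $\mathcal{L}_x(C)$. For $\omega\in\mathfrak{M}_{xy}(C)$, $\pi_x(\omega)(\varphi(x))=\omega(\varphi(x)\wedge y=y)$ (similarly $\pi_y$); $\omega|_D$ is restriction. $\mathfrak{M}^{\mathrm{Am}}_{xy}(C)$ is the set of $\lambda\in\mathfrak{M}_{xy}(C)$ with $\lambda(\varphi(x)\wedge\psi(y))=\pi_x(\lambda)(\varphi(x))\pi_y(\lambda)(\psi(y))$ for all $\varphi(x)\in\mathcal{L}_x(C),\psi(y)\in\mathcal{L}_y(C)$. For $\lambda\in\mathfrak{M}^{\mathrm{Am}}_{xy}(A)$ with $\pi_x(\lambda)=\mu|_A$: $\operatorname{Amal}(\lambda,\mu)=\{\omega\in\mathfrak{M}^{\mathrm{Am}}_{xy}(\mathcal{U}):\omega|_A=\lambda,\pi_x(\omega)=\mu\}$.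 $\mu\blacktriangleright_A\nu$ means there is $\lambda\in\mathfrak{M}_{xy}(A)$ with $\pi_x(\lambda)=\mu|_A$, $\operatorname{Amal}(\lambda,\mu)\neq\emptyset$, and $\pi_y(\omega)=\nu$ for every $\omega\in\operatorname{Amal}(\lambda,\mu)$. $Ab$ denotes $A$ together with the entries of $b$. The localization is $\nu_{[\varphi]}(\psi(y))=\nu(\varphi(y,b)\wedge\psi(y))/\nu(\varphi(y,b))$. *)

theory Defs
  imports Complex_Main
begin

text \<open>Terms and formulas of a first-order language with function symbols of type 'f
  and relation symbols of type 'r (each symbol may be applied to argument lists of any
  length, i.e. a symbol f together with a length n is an n-ary symbol).\<close>

datatype 'f trm = Var nat | App 'f "'f trm list"

datatype ('f, 'r) fm =
    FEq "'f trm" "'f trm"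
  | FRel 'r "'f trm list"
  | FNeg "('f, 'r) fm"
  | FConj "('f, 'r) fm" "('f, 'r) fm"
  | FEx nat "('f, 'r) fm"

text \<open>A structure with universe the whole type 'u.\<close>
datatype ('f, 'r, 'u) struct =
  Struct (sfun: "'f \<Rightarrow> 'u list \<Rightarrow> 'u") (srel: "'r \<Rightarrow> 'u list \<Rightarrow> bool")

fun fv_trm :: "'f trm \<Rightarrow> nat set" where
  "fv_trm (Var i) = {i}"
| "fv_trm (App f ts) = (\<Union>t\<in>set ts. fv_trm t)"

fun fv :: "('f, 'r) fm \<Rightarrow> nat set" where
  "fv (FEq s t) = fv_trm s \<union> fv_trm t"
| "fv (FRel r ts) = (\<Union>t\<in>set ts. fv_trm t)"
| "fv (FNeg \<phi>) = fv \<phi>"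
| "fv (FConj \<phi> \<psi>) = fv \<phi> \<union> fv \<psi>"
| "fv (FEx v \<phi>) = fv \<phi> - {v}"

fun eval_trm :: "('f, 'r, 'u) struct \<Rightarrow> (nat \<Rightarrow> 'u) \<Rightarrow> 'f trm \<Rightarrow> 'u" where
  "eval_trm M e (Var i) = e i"
| "eval_trm M e (App f ts) = sfun M f (map (eval_trm M e) ts)"

fun sat :: "('f, 'r, 'u) struct \<Rightarrow> (nat \<Rightarrow> 'u) \<Rightarrow> ('f, 'r) fm \<Rightarrow> bool" where
  "sat M e (FEq s t) = (eval_trm M e s = eval_trm M e t)"
| "sat M e (FRel r ts) = srel M r (map (eval_trm M e) ts)"
| "sat M e (FNeg \<phi>) = (\<not> sat M e \<phi>)"
| "sat M e (FConj \<phi> \<psi>) = (sat M e \<phi> \<and> sat M e \<psi>)"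
| "sat M e (FEx v \<phi>) = (\<exists>a. sat M (e(v := a)) \<phi>)"

text \<open>\<open>Ldef M n C\<close>: the Boolean algebra \<open>\<L>_x(C)\<close> for a tuple of variables x of length n,
  realised (as usual, modulo T = Th(M)) as the set of subsets of \<open>U^n\<close> (lists of length n)
  definable by a formula \<open>\<phi>(x, c)\<close> with parameters \<open>c\<close> from C.  The variables
  \<open>0..n-1\<close> are x, the variables \<open>n..n+k-1\<close> are the parameter places.\<close>
definition Ldef :: "('f, 'r, 'u) struct \<Rightarrow> nat \<Rightarrow> 'u set \<Rightarrow> 'u list set set" where
  "Ldef M n C = {D. \<exists>(\<phi> :: ('f, 'r) fm) ps. set ps \<subseteq> C \<and> fv \<phi> \<subseteq> {..<n + length ps} \<and>
      D = {as. length as = n \<and> sat M (\<lambda>i. (as @ ps) ! i) \<phi>}}"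

definition full :: "nat \<Rightarrow> 'u list set" where
  "full n = {as. length as = n}"

text \<open>Keisler measures \<open>\<mu> \<in> \<M>_x(C)\<close>: finitely additive probability measures on \<open>\<L>_x(C)\<close>
  (values of \<open>\<mu>\<close> outside \<open>\<L>_x(C)\<close> are irrelevant).\<close>
definition keisler :: "('f, 'r, 'u) struct \<Rightarrow> nat \<Rightarrow> 'u set \<Rightarrow> ('u list set \<Rightarrow> real) \<Rightarrow> bool" where
  "keisler M n C \<mu> \<longleftrightarrow>
     (\<forall>D\<in>Ldef M n C. 0 \<le> \<mu> D) \<and> \<mu> (full n) = 1 \<and>
     (\<forall>D\<in>Ldef M n C. \<forall>E\<in>Ldef M n C. D \<inter> E = {} \<longrightarrow> \<mu> (D \<union> E) = \<mu> D + \<mu> E)"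

text \<open>Equality of two measures as measures on the algebra \<open>L\<close> (used for restriction).\<close>
definition agree :: "'a set set \<Rightarrow> ('a set \<Rightarrow> real) \<Rightarrow> ('a set \<Rightarrow> real) \<Rightarrow> bool" where
  "agree L f g \<longleftrightarrow> (\<forall>D\<in>L. f D = g D)"

text \<open>The embeddings \<open>\<phi>(x) \<mapsto> \<phi>(x) \<and> y = y\<close> and \<open>\<psi>(y) \<mapsto> x = x \<and> \<psi>(y)\<close>,
  where |x| = n and |y| = m.\<close>
definition cyl_x :: "nat \<Rightarrow> nat \<Rightarrow> 'u list set \<Rightarrow> 'u list set" where
  "cyl_x n m D = {a @ b | a b. a \<in> D \<and> length b = m}"

definition cyl_y :: "nat \<Rightarrow> nat \<Rightarrow> 'u list set \<Rightarrow> 'u list set" where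
  "cyl_y n m E = {a @ b | a b. length a = n \<and> b \<in> E}"

definition proj_x :: "nat \<Rightarrow> nat \<Rightarrow> ('u list set \<Rightarrow> real) \<Rightarrow> 'u list set \<Rightarrow> real" where
  "proj_x n m \<omega> D = \<omega> (cyl_x n m D)"

definition proj_y :: "nat \<Rightarrow> nat \<Rightarrow> ('u list set \<Rightarrow> real) \<Rightarrow> 'u list set \<Rightarrow> real" where
  "proj_y n m \<omega> E = \<omega> (cyl_y n m E)"

definition amalgam :: "('f, 'r, 'u) struct \<Rightarrow> nat \<Rightarrow> nat \<Rightarrow> 'u set \<Rightarrow> ('u list set \<Rightarrow> real) \<Rightarrow> bool" where
  "amalgam M n m C lam \<longleftrightarrow> keisler M (n + m) C lam \<and>
     (\<forall>D\<in>Ldef M n C. \<forall>E\<in>Ldef M m C.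
        lam (cyl_x n m D \<inter> cyl_y n m E) = proj_x n m lam D * proj_y n m lam E)"

definition Amal :: "('f, 'r, 'u) struct \<Rightarrow> nat \<Rightarrow> nat \<Rightarrow> 'u set \<Rightarrow> ('u list set \<Rightarrow> real)
    \<Rightarrow> ('u list set \<Rightarrow> real) \<Rightarrow> ('u list set \<Rightarrow> real) set" where
  "Amal M n m A lam \<mu> = {\<omega>. amalgam M n m UNIV \<omega> \<and> agree (Ldef M (n + m) A) \<omega> lam \<and>
                          agree (Ldef M n UNIV) (proj_x n m \<omega>) \<mu>}"

definition pushes :: "('f, 'r, 'u) struct \<Rightarrow> nat \<Rightarrow> nat \<Rightarrow> 'u set \<Rightarrow> ('u list set \<Rightarrow> real)
    \<Rightarrow> ('u list set \<Rightarrow> real) \<Rightarrow> bool" where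
  "pushes M n m A \<mu> \<nu> \<longleftrightarrow> (\<exists>lam. keisler M (n + m) A lam \<and>
      agree (Ldef M n A) (proj_x n m lam) \<mu> \<and>
      Amal M n m A lam \<mu> \<noteq> {} \<and>
      (\<forall>\<omega>\<in>Amal M n m A lam \<mu>. agree (Ldef M m UNIV) (proj_y n m \<omega>) \<nu>))"

definition localize :: "('u list set \<Rightarrow> real) \<Rightarrow> 'u list set \<Rightarrow> 'u list set \<Rightarrow> real" where
  "localize \<nu> E0 E = \<nu> (E0 \<inter> E) / \<nu> E0"

definition small :: "'k set \<Rightarrow> 'u set \<Rightarrow> bool" where
  "small K C \<longleftrightarrow> (card_of C, card_of K) \<in> ordLess"

definition elementary_map :: "('f, 'r, 'u) struct \<Rightarrow> 'u set \<Rightarrow> ('u \<Rightarrow> 'u) \<Rightarrow> bool" where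
  "elementary_map M C f \<longleftrightarrow> (\<forall>(\<phi> :: ('f, 'r) fm) ps. set ps \<subseteq> C \<and> fv \<phi> \<subseteq> {..<length ps} \<longrightarrow>
      (sat M (\<lambda>i. ps ! i) \<phi> \<longleftrightarrow> sat M (\<lambda>i. map f ps ! i) \<phi>))"

definition automorphism :: "('f, 'r, 'u) struct \<Rightarrow> ('u \<Rightarrow> 'u) \<Rightarrow> bool" where
  "automorphism M \<sigma> \<longleftrightarrow> bij \<sigma> \<and>
     (\<forall>f as. \<sigma> (sfun M f as) = sfun M f (map \<sigma> as)) \<and>
     (\<forall>r as. srel M r (map \<sigma> as) = srel M r as)"

definition saturated :: "('f, 'r, 'u) struct \<Rightarrow> 'k set \<Rightarrow> bool" where
  "saturated M K \<longleftrightarrow> (\<forall>C (\<Sigma> :: (('f, 'r) fm \<times> 'u list) set). small K C \<longrightarrow>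
      (\<forall>(\<phi>, ps)\<in>\<Sigma>. set ps \<subseteq> C \<and> fv \<phi> \<subseteq> {..<Suc (length ps)}) \<longrightarrow>
      (\<forall>F. finite F \<and> F \<subseteq> \<Sigma> \<longrightarrow> (\<exists>a. \<forall>(\<phi>, ps)\<in>F. sat M (\<lambda>i. (a # ps) ! i) \<phi>)) \<longrightarrow>
      (\<exists>a. \<forall>(\<phi>, ps)\<in>\<Sigma>. sat M (\<lambda>i. (a # ps) ! i) \<phi>))"

definition strongly_homogeneous :: "('f, 'r, 'u) struct \<Rightarrow> 'k set \<Rightarrow> bool" where
  "strongly_homogeneous M K \<longleftrightarrow> (\<forall>C f. small K C \<longrightarrow> elementary_map M C f \<longrightarrow>
      (\<exists>\<sigma>. automorphism M \<sigma> \<and> (\<forall>c\<in>C. \<sigma> c = f c)))"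

text \<open>M is a monster model (of its complete theory T = Th(M)) for the cardinal |K|,
  which is infinite and bigger than the size of the language.\<close>
definition monster_model :: "('f, 'r, 'u) struct \<Rightarrow> 'k set \<Rightarrow> bool" where
  "monster_model M K \<longleftrightarrow> infinite K \<and> (card_of (UNIV :: ('f + 'r) set), card_of K) \<in> ordLess \<and>
     saturated M K \<and> strongly_homogeneous M K"

end

theory Submission
  imports Defs
begin

(* Let \<omega> \<in> Amal(\<lambda>, \<mu>) witness \<mu> \<blacktriangleright>_A \<nu>, so that \<pi>_y(\<omega>) = \<nu>, and let Y be the cylinder
   over \<phi>(y, b).  Localizing \<omega> at Y gives again an amalgam, with x-projection \<mu> and
   y-projection \<nu>_[\<phi>]; it is the new \<lambda>.  Conversely, any \<omega>\<^sub>2 \<in> Amal(\<omega>_[Y], \<mu>) over Ab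
   recombines with \<omega> into \<nu>(\<phi>) \<omega>\<^sub>2 + \<omega>(\<cdot> - Y), which lies in Amal(\<lambda>, \<mu>) because \<omega>\<^sub>2
   agrees with \<omega>_[Y] on L(A).  So its y-projection is \<nu>, and solving for \<pi>_y(\<omega>\<^sub>2) gives \<nu>_[\<phi>]. *)

fun rename_trm :: "(nat \<Rightarrow> nat) \<Rightarrow> 'f trm \<Rightarrow> 'f trm" where
  "rename_trm g (Var i) = Var (g i)"
| "rename_trm g (App f ts) = App f (map (rename_trm g) ts)"

fun rename :: "(nat \<Rightarrow> nat) \<Rightarrow> ('f, 'r) fm \<Rightarrow> ('f, 'r) fm" where
  "rename g (FEq s t) = FEq (rename_trm g s) (rename_trm g t)"
| "rename g (FRel r ts) = FRel r (map (rename_trm g) ts)"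
| "rename g (FNeg \<phi>) = FNeg (rename g \<phi>)"
| "rename g (FConj \<phi> \<psi>) = FConj (rename g \<phi>) (rename g \<psi>)"
| "rename g (FEx v \<phi>) = FEx (g v) (rename g \<phi>)"

lemma eval_rename_trm: "eval_trm M e (rename_trm g t) = eval_trm M (e \<circ> g) t"
  by (induction t) (auto cong: map_cong)

lemma fv_rename_trm: "fv_trm (rename_trm g t) = g ` fv_trm t"
  by (induction t) auto

lemma sat_rename: "inj g \<Longrightarrow> sat M e (rename g \<phi>) = sat M (e \<circ> g) \<phi>"
proof (induction \<phi> arbitrary: e)
  case (FEx v \<phi>)
  have "(e(g v := a)) \<circ> g = (e \<circ> g)(v := a)" for a
    using FEx.prems by (auto simp: fun_eq_iff inj_on_def)
  then show ?case by (simp only: rename.simps sat.simps FEx.IH[OF FEx.prems])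
qed (auto simp: eval_rename_trm comp_def cong: map_cong)

lemma fv_rename: "inj g \<Longrightarrow> fv (rename g \<phi>) = g ` fv \<phi>"
  by (induction \<phi>) (auto simp: fv_rename_trm inj_on_def)

lemma eval_trm_cong: "(\<And>i. i \<in> fv_trm t \<Longrightarrow> e i = e' i) \<Longrightarrow> eval_trm M e t = eval_trm M e' t"
  by (induction t) (auto intro!: arg_cong[where f = "sfun M _"] map_cong)

lemma sat_cong: "(\<And>i. i \<in> fv \<phi> \<Longrightarrow> e i = e' i) \<Longrightarrow> sat M e \<phi> = sat M e' \<phi>"
proof (induction \<phi> arbitrary: e e')
  case (FEq s t)
  then show ?case using eval_trm_cong[of s e e' M] eval_trm_cong[of t e e' M] by simp
next
  case (FRel r ts)
  have "map (eval_trm M e) ts = map (eval_trm M e') ts"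
    by (intro map_cong refl eval_trm_cong) (use FRel in auto)
  then show ?case by (simp only: sat.simps)
next
  case (FNeg \<phi>)
  show ?case using FNeg.IH[of e e'] FNeg.prems by simp
next
  case (FConj \<phi> \<psi>)
  have "sat M e \<phi> = sat M e' \<phi>" "sat M e \<psi> = sat M e' \<psi>"
    by (intro FConj.IH; use FConj.prems in simp)+
  then show ?case by simp
next
  case (FEx v \<phi>)
  have "sat M (e(v := a)) \<phi> = sat M (e'(v := a)) \<phi>" for a
    by (rule FEx.IH) (use FEx.prems in auto)
  then show ?case by simp
qed

lemma sat_rename_cong:
  "inj g \<Longrightarrow> (\<And>i. i \<in> fv \<phi> \<Longrightarrow> e (g i) = e' i) \<Longrightarrow> sat M e (rename g \<phi>) = sat M e' \<phi>"
  by (simp add: sat_rename) (rule sat_cong, simp)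

lemma inj_shift_above: "inj (\<lambda>i::nat. if i < k then i else i + d)"
  by (auto simp: inj_on_def split: if_splits)

lemma Ldef_mono: "C \<subseteq> C' \<Longrightarrow> Ldef M k C \<subseteq> Ldef M k C'"
  unfolding Ldef_def by blast

lemma Ldef_subset_full: "D \<in> Ldef M k C \<Longrightarrow> D \<subseteq> full k"
  unfolding Ldef_def full_def by auto

lemma full_in_Ldef: "full k \<in> Ldef M k C"
proof -
  have "full k = {as. length as = k \<and> sat M (\<lambda>i. (as @ []) ! i) (FEx 0 (FEq (Var 0) (Var 0)))}"
    by (simp add: full_def)
  then show ?thesis
    unfolding Ldef_def by (intro CollectI exI[of _ "FEx 0 (FEq (Var 0) (Var 0))"] exI[of _ "[]"]) auto
qed

lemma Ldef_compl: "D \<in> Ldef M k C \<Longrightarrow> full k - D \<in> Ldef M k C"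
proof -
  assume "D \<in> Ldef M k C"
  then obtain \<phi> ps where "set ps \<subseteq> C" "fv \<phi> \<subseteq> {..<k + length ps}"
    and D: "D = {as. length as = k \<and> sat M (\<lambda>i. (as @ ps) ! i) \<phi>}"
    unfolding Ldef_def by blast
  moreover have "full k - D = {as. length as = k \<and> sat M (\<lambda>i. (as @ ps) ! i) (FNeg \<phi>)}"
    using D by (auto simp: full_def)
  ultimately show ?thesis
    unfolding Ldef_def by (intro CollectI exI[of _ "FNeg \<phi>"] exI[of _ ps]) auto
qed

lemma Ldef_Int: "D \<in> Ldef M k C \<Longrightarrow> E \<in> Ldef M k C \<Longrightarrow> D \<inter> E \<in> Ldef M k C"
proof -
  assume "D \<in> Ldef M k C" "E \<in> Ldef M k C"
  then obtain \<phi> ps \<psi> qs where ps: "set ps \<subseteq> C" "fv \<phi> \<subseteq> {..<k + length ps}"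
    and D: "D = {as. length as = k \<and> sat M (\<lambda>i. (as @ ps) ! i) \<phi>}"
    and qs: "set qs \<subseteq> C" "fv \<psi> \<subseteq> {..<k + length qs}"
    and E: "E = {as. length as = k \<and> sat M (\<lambda>i. (as @ qs) ! i) \<psi>}"
    unfolding Ldef_def by blast
  \<comment> \<open>parameter lists are concatenated, so the parameter places of \<open>\<psi>\<close> move past \<open>ps\<close>\<close>
  define g where "g i = (if i < k then i else i + length ps)" for i
  have "inj g" unfolding g_def by (rule inj_shift_above)
  have "sat M (\<lambda>i. (as @ ps @ qs) ! i) \<phi> = sat M (\<lambda>i. (as @ ps) ! i) \<phi>" if "length as = k" for as
    using ps(2) that by (intro sat_cong) (auto simp: nth_append)
  moreover have "sat M (\<lambda>i. (as @ ps @ qs) ! i) (rename g \<psi>) = sat M (\<lambda>i. (as @ qs) ! i) \<psi>"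
    if "length as = k" for as
    using qs(2) that \<open>inj g\<close> by (intro sat_rename_cong) (auto simp: nth_append g_def)
  ultimately have "D \<inter> E = {as. length as = k \<and> sat M (\<lambda>i. (as @ ps @ qs) ! i) (FConj \<phi> (rename g \<psi>))}"
    using D E by auto
  moreover have "fv (FConj \<phi> (rename g \<psi>)) \<subseteq> {..<k + length (ps @ qs)}"
    using ps(2) qs(2) \<open>inj g\<close> by (auto simp: fv_rename g_def)
  ultimately show ?thesis
    using ps(1) qs(1) unfolding Ldef_def
    by (intro CollectI exI[of _ "FConj \<phi> (rename g \<psi>)"] exI[of _ "ps @ qs"]) auto
qed

lemma Ldef_Diff: "D \<in> Ldef M k C \<Longrightarrow> E \<in> Ldef M k C \<Longrightarrow> D - E \<in> Ldef M k C"
proof -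
  assume D: "D \<in> Ldef M k C" and E: "E \<in> Ldef M k C"
  then have "D - E = D \<inter> (full k - E)" using Ldef_subset_full by blast
  then show ?thesis using Ldef_Int[OF D Ldef_compl[OF E]] by simp
qed

lemma Ldef_reindex:
  assumes "D \<in> Ldef M k C" and "inj g" and "g ` {..<k} \<subseteq> {..<k + d}" and "\<And>i. k \<le> i \<Longrightarrow> g i = i + d"
  shows "{as. length as = k + d \<and> map (\<lambda>i. as ! g i) [0..<k] \<in> D} \<in> Ldef M (k + d) C"
proof -
  obtain \<phi> ps where ps: "set ps \<subseteq> C" "fv \<phi> \<subseteq> {..<k + length ps}"
    and D: "D = {as. length as = k \<and> sat M (\<lambda>i. (as @ ps) ! i) \<phi>}"
    using assms(1) unfolding Ldef_def by blast
  have "sat M (\<lambda>i. (as @ ps) ! i) (rename g \<phi>) = sat M (\<lambda>i. (map (\<lambda>i. as ! g i) [0..<k] @ ps) ! i) \<phi>"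
    if "length as = k + d" for as
  proof (rule sat_rename_cong[OF assms(2)])
    fix i assume "i \<in> fv \<phi>"
    then show "(as @ ps) ! g i = (map (\<lambda>i. as ! g i) [0..<k] @ ps) ! i"
      using ps(2) assms(3,4) that by (cases "i < k") (auto simp: nth_append)
  qed
  then have "{as. length as = k + d \<and> map (\<lambda>i. as ! g i) [0..<k] \<in> D} =
      {as. length as = k + d \<and> sat M (\<lambda>i. (as @ ps) ! i) (rename g \<phi>)}"
    using D by auto
  moreover have "g i < k + d + length ps" if "i \<in> fv \<phi>" for i
    using ps(2) assms(3,4) that by (cases "i < k") auto
  then have "fv (rename g \<phi>) \<subseteq> {..<k + d + length ps}"
    using assms(2) by (auto simp: fv_rename)
  ultimately show ?thesis
    using ps(1) unfolding Ldef_def by (intro CollectI exI[of _ "rename g \<phi>"] exI[of _ ps]) auto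
qed

lemma mem_cyl_x: "D \<subseteq> full n \<Longrightarrow> xs \<in> cyl_x n m D \<longleftrightarrow> length xs = n + m \<and> take n xs \<in> D"
proof
  assume "D \<subseteq> full n" "xs \<in> cyl_x n m D"
  then show "length xs = n + m \<and> take n xs \<in> D"
    unfolding cyl_x_def full_def by auto
next
  assume "length xs = n + m \<and> take n xs \<in> D"
  then show "xs \<in> cyl_x n m D"
    unfolding cyl_x_def by (intro CollectI exI[of _ "take n xs"] exI[of _ "drop n xs"]) auto
qed

lemma mem_cyl_y: "xs \<in> cyl_y n m E \<longleftrightarrow> n \<le> length xs \<and> drop n xs \<in> E"
proof
  assume "xs \<in> cyl_y n m E"
  then show "n \<le> length xs \<and> drop n xs \<in> E"
    unfolding cyl_y_def by auto
next
  assume "n \<le> length xs \<and> drop n xs \<in> E"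
  then show "xs \<in> cyl_y n m E"
    unfolding cyl_y_def by (intro CollectI exI[of _ "take n xs"] exI[of _ "drop n xs"]) auto
qed

lemma cyl_y_Int: "cyl_y n m E \<inter> cyl_y n m F = cyl_y n m (E \<inter> F)"
  by (auto simp: mem_cyl_y)

lemma Ldef_cyl_x: "D \<in> Ldef M n C \<Longrightarrow> cyl_x n m D \<in> Ldef M (n + m) C"
proof -
  assume D: "D \<in> Ldef M n C"
  have "map (\<lambda>i. as ! (if i < n then i else i + m)) [0..<n] = take n as"
    if "length as = n + m" for as :: "'a list"
    using that by (intro nth_equalityI) auto
  then have "cyl_x n m D =
      {as. length as = n + m \<and> map (\<lambda>i. as ! (if i < n then i else i + m)) [0..<n] \<in> D}"
    using mem_cyl_x[OF Ldef_subset_full[OF D]] by auto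
  moreover have "{as. length as = n + m \<and> map (\<lambda>i. as ! (if i < n then i else i + m)) [0..<n] \<in> D}
      \<in> Ldef M (n + m) C"
    by (rule Ldef_reindex[OF D inj_shift_above]) auto
  ultimately show ?thesis by (simp only:)
qed

lemma Ldef_cyl_y: "E \<in> Ldef M m C \<Longrightarrow> cyl_y n m E \<in> Ldef M (n + m) C"
proof -
  assume E: "E \<in> Ldef M m C"
  have "map (\<lambda>i. as ! (i + n)) [0..<m] = drop n as" if "length as = m + n" for as :: "'a list"
    using that by (intro nth_equalityI) (auto simp: add.commute)
  then have "cyl_y n m E = {as. length as = m + n \<and> map (\<lambda>i. as ! (i + n)) [0..<m] \<in> E}"
    using Ldef_subset_full[OF E] by (auto simp: mem_cyl_y full_def)
  moreover have "{as. length as = m + n \<and> map (\<lambda>i. as ! (i + n)) [0..<m] \<in> E} \<in> Ldef M (m + n) C"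
    by (rule Ldef_reindex[OF E]) (auto simp: inj_on_def)
  ultimately show ?thesis by (simp add: add.commute)
qed

lemma keisler_nonneg: "keisler M k C \<omega> \<Longrightarrow> D \<in> Ldef M k C \<Longrightarrow> 0 \<le> \<omega> D"
  unfolding keisler_def by blast

lemma keisler_full: "keisler M k C \<omega> \<Longrightarrow> \<omega> (full k) = 1"
  unfolding keisler_def by blast

lemma keisler_add:
  "keisler M k C \<omega> \<Longrightarrow> D \<in> Ldef M k C \<Longrightarrow> E \<in> Ldef M k C \<Longrightarrow> D \<inter> E = {} \<Longrightarrow>
    \<omega> (D \<union> E) = \<omega> D + \<omega> E"
  unfolding keisler_def by blast

lemma keisler_mono: "keisler M k C' \<omega> \<Longrightarrow> C \<subseteq> C' \<Longrightarrow> keisler M k C \<omega>"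
  using Ldef_mono[of C C' M k] unfolding keisler_def by (simp add: subset_iff)

lemma keisler_split:
  assumes "keisler M k C \<omega>" and "Y \<in> Ldef M k C" and "S \<in> Ldef M k C"
  shows "\<omega> S = \<omega> (Y \<inter> S) + \<omega> (S - Y)"
proof -
  have "\<omega> ((Y \<inter> S) \<union> (S - Y)) = \<omega> (Y \<inter> S) + \<omega> (S - Y)"
    using assms by (intro keisler_add Ldef_Int Ldef_Diff) auto
  moreover have "(Y \<inter> S) \<union> (S - Y) = S" by blast
  ultimately show ?thesis by simp
qed

lemma keisler_localize:
  assumes "keisler M k C \<omega>" and "Y \<in> Ldef M k C" and "0 < \<omega> Y"
  shows "keisler M k C (localize \<omega> Y)"
  unfolding keisler_def localize_def
proof (intro conjI ballI impI)
  show "0 \<le> \<omega> (Y \<inter> D) / \<omega> Y" if "D \<in> Ldef M k C" for D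
    using keisler_nonneg[OF assms(1) Ldef_Int[OF assms(2) that]] assms(3) by simp
  show "\<omega> (Y \<inter> full k) / \<omega> Y = 1"
    using assms(3) Ldef_subset_full[OF assms(2)] by (simp add: Int_absorb2)
  show "\<omega> (Y \<inter> (D \<union> E)) / \<omega> Y = \<omega> (Y \<inter> D) / \<omega> Y + \<omega> (Y \<inter> E) / \<omega> Y"
    if "D \<in> Ldef M k C" "E \<in> Ldef M k C" "D \<inter> E = {}" for D E
  proof -
    have "\<omega> ((Y \<inter> D) \<union> (Y \<inter> E)) = \<omega> (Y \<inter> D) + \<omega> (Y \<inter> E)"
      using assms(1,2) that by (intro keisler_add Ldef_Int) auto
    moreover have "Y \<inter> (D \<union> E) = (Y \<inter> D) \<union> (Y \<inter> E)" by blast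
    ultimately show ?thesis by (simp add: add_divide_distrib)
  qed
qed

text \<open>The inverse of localization: \<open>\<omega>\<close> with its localization at \<open>Y\<close> replaced by \<open>\<omega>'\<close>.\<close>

definition recombine :: "('a set \<Rightarrow> real) \<Rightarrow> ('a set \<Rightarrow> real) \<Rightarrow> 'a set \<Rightarrow> 'a set \<Rightarrow> real" where
  "recombine \<omega>' \<omega> Y S = \<omega> Y * \<omega>' S + \<omega> (S - Y)"

lemma recombine_localize:
  assumes "keisler M k C \<omega>" and "Y \<in> Ldef M k C" and "0 < \<omega> Y" and "S \<in> Ldef M k C"
  shows "recombine (localize \<omega> Y) \<omega> Y S = \<omega> S"
  using keisler_split[OF assms(1,2,4)] assms(3) by (simp add: recombine_def localize_def)

lemma keisler_recombine:
  assumes "keisler M k C \<omega>" and "keisler M k C \<omega>'" and "Y \<in> Ldef M k C"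
  shows "keisler M k C (recombine \<omega>' \<omega> Y)"
  unfolding keisler_def recombine_def
proof (intro conjI ballI impI)
  show "0 \<le> \<omega> Y * \<omega>' D + \<omega> (D - Y)" if "D \<in> Ldef M k C" for D
    using keisler_nonneg[OF assms(1) assms(3)] keisler_nonneg[OF assms(2) that]
      keisler_nonneg[OF assms(1) Ldef_Diff[OF that assms(3)]] by simp
  have "\<omega> (full k) = \<omega> Y + \<omega> (full k - Y)"
    using keisler_split[OF assms(1,3) full_in_Ldef] Ldef_subset_full[OF assms(3)]
    by (simp add: Int_absorb2)
  then show "\<omega> Y * \<omega>' (full k) + \<omega> (full k - Y) = 1"
    using keisler_full[OF assms(1)] keisler_full[OF assms(2)] by simp
  show "\<omega> Y * \<omega>' (D \<union> E) + \<omega> (D \<union> E - Y) =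
      \<omega> Y * \<omega>' D + \<omega> (D - Y) + (\<omega> Y * \<omega>' E + \<omega> (E - Y))"
    if "D \<in> Ldef M k C" "E \<in> Ldef M k C" "D \<inter> E = {}" for D E
  proof -
    have "\<omega> ((D - Y) \<union> (E - Y)) = \<omega> (D - Y) + \<omega> (E - Y)"
      using assms(1,3) that by (intro keisler_add Ldef_Diff) auto
    moreover have "D \<union> E - Y = (D - Y) \<union> (E - Y)" by blast
    ultimately show ?thesis
      using keisler_add[OF assms(2) that] by (simp add: distrib_left)
  qed
qed

lemma amalgam_product:
  "amalgam M n m C \<omega> \<Longrightarrow> D \<in> Ldef M n C \<Longrightarrow> E \<in> Ldef M m C \<Longrightarrow>
    \<omega> (cyl_x n m D \<inter> cyl_y n m E) = proj_x n m \<omega> D * proj_y n m \<omega> E"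
  unfolding amalgam_def by blast

lemma amalgam_product_Int:
  assumes "amalgam M n m C \<omega>" and "D \<in> Ldef M n C" and "Y \<in> Ldef M m C" and "E \<in> Ldef M m C"
  shows "\<omega> (cyl_y n m Y \<inter> (cyl_x n m D \<inter> cyl_y n m E)) = proj_x n m \<omega> D * proj_y n m \<omega> (Y \<inter> E)"
proof -
  have "cyl_y n m Y \<inter> (cyl_x n m D \<inter> cyl_y n m E) = cyl_x n m D \<inter> cyl_y n m (Y \<inter> E)"
    by (auto simp flip: cyl_y_Int)
  then show ?thesis using amalgam_product[OF assms(1,2) Ldef_Int[OF assms(3,4)]] by simp
qed

lemma proj_y_localize_cyl_y:
  "proj_y n m (localize \<omega> (cyl_y n m Y)) E = localize (proj_y n m \<omega>) Y E"
  unfolding proj_y_def localize_def cyl_y_Int ..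

lemma proj_x_localize_cyl_y:
  assumes "amalgam M n m C \<omega>" and "Y \<in> Ldef M m C" and "0 < proj_y n m \<omega> Y" and "D \<in> Ldef M n C"
  shows "proj_x n m (localize \<omega> (cyl_y n m Y)) D = proj_x n m \<omega> D"
  using amalgam_product[OF assms(1,4,2)] assms(3)
  by (simp add: proj_x_def localize_def Int_commute) (simp add: proj_y_def)

lemma amalgam_localize_cyl_y:
  assumes "amalgam M n m C \<omega>" and "Y \<in> Ldef M m C" and "0 < proj_y n m \<omega> Y"
  shows "amalgam M n m C (localize \<omega> (cyl_y n m Y))"
  unfolding amalgam_def
proof (intro conjI ballI)
  show "keisler M (n + m) C (localize \<omega> (cyl_y n m Y))"
    using assms Ldef_cyl_y unfolding amalgam_def proj_y_def by (blast intro: keisler_localize)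
  fix D E assume "D \<in> Ldef M n C" "E \<in> Ldef M m C"
  then show "localize \<omega> (cyl_y n m Y) (cyl_x n m D \<inter> cyl_y n m E) =
      proj_x n m (localize \<omega> (cyl_y n m Y)) D * proj_y n m (localize \<omega> (cyl_y n m Y)) E"
    using assms amalgam_product_Int[OF assms(1) _ assms(2)]
    by (simp add: proj_x_localize_cyl_y proj_y_localize_cyl_y) (simp add: localize_def proj_y_def)
qed

lemma proj_x_recombine_cyl_y:
  assumes "amalgam M n m C \<omega>" and "Y \<in> Ldef M m C" and "D \<in> Ldef M n C"
    and "proj_x n m \<omega>' D = proj_x n m \<omega> D"
  shows "proj_x n m (recombine \<omega>' \<omega> (cyl_y n m Y)) D = proj_x n m \<omega> D"
proof -
  have "keisler M (n + m) C \<omega>" using assms(1) unfolding amalgam_def by blast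
  then have "\<omega> (cyl_x n m D) = \<omega> (cyl_y n m Y \<inter> cyl_x n m D) + \<omega> (cyl_x n m D - cyl_y n m Y)"
    by (rule keisler_split[OF _ Ldef_cyl_y[OF assms(2)] Ldef_cyl_x[OF assms(3)]])
  moreover have "\<omega> (cyl_y n m Y \<inter> cyl_x n m D) = proj_x n m \<omega> D * proj_y n m \<omega> Y"
    using amalgam_product[OF assms(1,3,2)] by (simp add: Int_commute)
  ultimately show ?thesis
    using assms(4) by (simp add: recombine_def proj_x_def proj_y_def algebra_simps)
qed

lemma proj_y_recombine_cyl_y:
  assumes "keisler M (n + m) C \<omega>" and "Y \<in> Ldef M m C" and "E \<in> Ldef M m C"
  shows "proj_y n m (recombine \<omega>' \<omega> (cyl_y n m Y)) E =
    proj_y n m \<omega> Y * proj_y n m \<omega>' E + proj_y n m \<omega> E - proj_y n m \<omega> (Y \<inter> E)"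
  using keisler_split[OF assms(1) Ldef_cyl_y[OF assms(2)] Ldef_cyl_y[OF assms(3)]]
  by (simp add: recombine_def proj_y_def cyl_y_Int)

lemma amalgam_recombine_cyl_y:
  assumes "amalgam M n m C \<omega>" and "amalgam M n m C \<omega>'" and "Y \<in> Ldef M m C"
    and "\<And>D. D \<in> Ldef M n C \<Longrightarrow> proj_x n m \<omega>' D = proj_x n m \<omega> D"
  shows "amalgam M n m C (recombine \<omega>' \<omega> (cyl_y n m Y))"
  unfolding amalgam_def
proof (intro conjI ballI)
  have \<omega>: "keisler M (n + m) C \<omega>" and \<omega>': "keisler M (n + m) C \<omega>'"
    using assms(1,2) unfolding amalgam_def by blast+
  then show "keisler M (n + m) C (recombine \<omega>' \<omega> (cyl_y n m Y))"
    using assms(3) by (intro keisler_recombine Ldef_cyl_y)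
  fix D E assume D: "D \<in> Ldef M n C" and E: "E \<in> Ldef M m C"
  let ?R = "cyl_x n m D \<inter> cyl_y n m E"
  have "\<omega> ?R = \<omega> (cyl_y n m Y \<inter> ?R) + \<omega> (?R - cyl_y n m Y)"
    using Ldef_Int[OF Ldef_cyl_x[OF D] Ldef_cyl_y[OF E]]
    by (rule keisler_split[OF \<omega> Ldef_cyl_y[OF assms(3)]])
  then have "\<omega> (?R - cyl_y n m Y) = proj_x n m \<omega> D * (proj_y n m \<omega> E - proj_y n m \<omega> (Y \<inter> E))"
    using amalgam_product[OF assms(1) D E] amalgam_product_Int[OF assms(1) D assms(3) E]
    by (simp add: algebra_simps)
  then show "recombine \<omega>' \<omega> (cyl_y n m Y) ?R =
      proj_x n m (recombine \<omega>' \<omega> (cyl_y n m Y)) D * proj_y n m (recombine \<omega>' \<omega> (cyl_y n m Y)) E"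
    using amalgam_product[OF assms(2) D E] assms(4)[OF D]
    by (simp add: recombine_def proj_x_recombine_cyl_y[OF assms(1,3) D assms(4)[OF D]]
        proj_y_recombine_cyl_y[OF \<omega> assms(3) E]) (simp add: proj_y_def algebra_simps)
qed

lemma localize_in_Amal:
  assumes "\<omega> \<in> Amal M n m A lam \<mu>" and "Y \<in> Ldef M m UNIV" and "0 < proj_y n m \<omega> Y"
  shows "localize \<omega> (cyl_y n m Y) \<in> Amal M n m C (localize \<omega> (cyl_y n m Y)) \<mu>"
proof -
  have am: "amalgam M n m UNIV \<omega>" and proj_x_eq: "\<And>D. D \<in> Ldef M n UNIV \<Longrightarrow> proj_x n m \<omega> D = \<mu> D"
    using assms(1) unfolding Amal_def agree_def by auto
  then show ?thesis
    using amalgam_localize_cyl_y[OF am assms(2,3)] proj_x_localize_cyl_y[OF am assms(2,3)]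
    unfolding Amal_def agree_def by simp
qed

lemma recombine_in_Amal:
  assumes \<omega>: "\<omega> \<in> Amal M n m A lam \<mu>" and Y: "Y \<in> Ldef M m UNIV" and pos: "0 < proj_y n m \<omega> Y"
    and "A \<subseteq> C" and \<omega>': "\<omega>' \<in> Amal M n m C (localize \<omega> (cyl_y n m Y)) \<mu>"
  shows "recombine \<omega>' \<omega> (cyl_y n m Y) \<in> Amal M n m A lam \<mu>"
proof -
  have am: "amalgam M n m UNIV \<omega>" and am': "amalgam M n m UNIV \<omega>'"
    and proj_x_eq: "\<And>D. D \<in> Ldef M n UNIV \<Longrightarrow> proj_x n m \<omega>' D = proj_x n m \<omega> D"
    using \<omega> \<omega>' unfolding Amal_def agree_def by auto
  have "recombine \<omega>' \<omega> (cyl_y n m Y) S = lam S" if S: "S \<in> Ldef M (n + m) A" for S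
  proof -
    have "\<omega>' S = localize \<omega> (cyl_y n m Y) S"
      using \<omega>' S Ldef_mono[OF \<open>A \<subseteq> C\<close>] unfolding Amal_def agree_def by blast
    then have "recombine \<omega>' \<omega> (cyl_y n m Y) S = recombine (localize \<omega> (cyl_y n m Y)) \<omega> (cyl_y n m Y) S"
      by (simp add: recombine_def)
    also have "\<dots> = \<omega> S"
      using am Ldef_cyl_y[OF Y] pos S Ldef_mono[of A UNIV]
      by (intro recombine_localize[where M = M and C = UNIV]) (auto simp: amalgam_def proj_y_def)
    also have "\<dots> = lam S"
      using \<omega> S unfolding Amal_def agree_def by blast
    finally show ?thesis .
  qed
  then show ?thesis
    using \<omega> amalgam_recombine_cyl_y[OF am am' Y proj_x_eq] proj_x_recombine_cyl_y[OF am Y _ proj_x_eq]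
    unfolding Amal_def agree_def by auto
qed

theorem pushes_localize:
  assumes "pushes M n m A \<mu> \<nu>" and "A \<subseteq> C" and E0: "E0 \<in> Ldef M m UNIV" and "0 < \<nu> E0"
  shows "pushes M n m C \<mu> (localize \<nu> E0)"
proof -
  obtain lam \<omega> where \<omega>: "\<omega> \<in> Amal M n m A lam \<mu>"
    and proj_y_Amal: "\<And>\<omega>\<^sub>1 E. \<omega>\<^sub>1 \<in> Amal M n m A lam \<mu> \<Longrightarrow> E \<in> Ldef M m UNIV \<Longrightarrow>
      proj_y n m \<omega>\<^sub>1 E = \<nu> E"
    using assms(1) unfolding pushes_def agree_def by blast
  have pos: "0 < proj_y n m \<omega> E0"
    using proj_y_Amal[OF \<omega> E0] assms(4) by simp
  define \<omega>' where "\<omega>' = localize \<omega> (cyl_y n m E0)"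
  have \<omega>': "\<omega>' \<in> Amal M n m C \<omega>' \<mu>"
    unfolding \<omega>'_def using localize_in_Amal[OF \<omega> E0 pos] .
  have "proj_y n m \<omega>\<^sub>2 E = localize \<nu> E0 E"
    if \<omega>\<^sub>2: "\<omega>\<^sub>2 \<in> Amal M n m C \<omega>' \<mu>" and E: "E \<in> Ldef M m UNIV" for \<omega>\<^sub>2 E
  proof -
    have "recombine \<omega>\<^sub>2 \<omega> (cyl_y n m E0) \<in> Amal M n m A lam \<mu>"
      using recombine_in_Amal[OF \<omega> E0 pos assms(2)] \<omega>\<^sub>2 unfolding \<omega>'_def .
    then have "\<nu> E = proj_y n m (recombine \<omega>\<^sub>2 \<omega> (cyl_y n m E0)) E"
      using E by (simp add: proj_y_Amal)
    also have "\<dots> = \<nu> E0 * proj_y n m \<omega>\<^sub>2 E + \<nu> E - \<nu> (E0 \<inter> E)"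
    proof -
      have "keisler M (n + m) UNIV \<omega>"
        using \<omega> unfolding Amal_def amalgam_def by blast
      then show ?thesis
        using proj_y_recombine_cyl_y[OF _ E0 E] proj_y_Amal[OF \<omega>] E0 E Ldef_Int[OF E0 E] by simp
    qed
    finally show ?thesis
      using assms(4) by (simp add: localize_def field_simps)
  qed
  then show ?thesis
    using \<omega>' keisler_mono[of M "n + m" UNIV \<omega>' C] Ldef_mono[of C UNIV M n]
    unfolding pushes_def Amal_def amalgam_def agree_def by blast
qed

theorem proposition5p7:
  fixes M :: "('f, 'r, 'u) struct" and K :: "'k set"
    and A :: "'u set" and b :: "'u list" and n m :: nat
    and \<mu> \<nu> :: "'u list set \<Rightarrow> real" and E0 :: "'u list set"
  assumes "monster_model M K"
    and "small K A"
    and "keisler M n UNIV \<mu>"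
    and "keisler M m UNIV \<nu>"
    and "E0 \<in> Ldef M m (set b)"
    and "0 < \<nu> E0" and "\<nu> E0 < 1"
    and "pushes M n m A \<mu> \<nu>"
  shows "pushes M n m (A \<union> set b) \<mu> (localize \<nu> E0)"
proof (rule pushes_localize[OF assms(8)])
  show "E0 \<in> Ldef M m UNIV"
    using assms(5) Ldef_mono[of "set b" UNIV] by blast
qed (use assms(6) in auto)

end
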